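(* Let $G$ be a factor-critical equimatchable graph. If $G$ is edge-stable, then $\mathrm{diam}(G)\le 2$.
   Context: All graphs are finite and simple. A graph is equimatchable if all its maximal matchings have the same cardinality; an equimatchable graph $G$ is edge-stable if $G\setminus e$ (delete edge $e$, keep vertices) is equimatchable for every $e\in E(G)$. A graph $G$ is factor-critical if $G-v$ has a perfect matching for every $v\in V(G)$. $\mathrm{diam}(G)=\max\{d(u,v):u,v\in V(G)\}$, where $d(u,v)$ is the length of a shortest $u$–$v$ path. *)

theory Defs
  imports Main "HOL-Library.Extended_Nat"
begin

definition simple_graph :: "'a set \<Rightarrow> 'a set set \<Rightarrow> bool" where
  "simple_graph V E \<longleftrightarrow> finite V \<and>
     (\<forall>e\<in>E. \<exists>u v. e = {u, v} \<and> u \<noteq> v \<and> u \<in> V \<and> v \<in> V)"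

definition matching :: "'a set set \<Rightarrow> 'a set set \<Rightarrow> bool" where
  "matching E M \<longleftrightarrow> M \<subseteq> E \<and> (\<forall>e1\<in>M. \<forall>e2\<in>M. e1 \<noteq> e2 \<longrightarrow> e1 \<inter> e2 = {})"

definition maximal_matching :: "'a set set \<Rightarrow> 'a set set \<Rightarrow> bool" where
  "maximal_matching E M \<longleftrightarrow> matching E M \<and>
     (\<forall>M'. matching E M' \<and> M \<subseteq> M' \<longrightarrow> M' = M)"

definition equimatchable :: "'a set \<Rightarrow> 'a set set \<Rightarrow> bool" where
  "equimatchable V E \<longleftrightarrow>
     (\<forall>M1 M2. maximal_matching E M1 \<and> maximal_matching E M2 \<longrightarrow> card M1 = card M2)"

definition edge_stable :: "'a set \<Rightarrow> 'a set set \<Rightarrow> bool" where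
  "edge_stable V E \<longleftrightarrow> equimatchable V E \<and> (\<forall>e\<in>E. equimatchable V (E - {e}))"

text \<open>Perfect matching of the induced subgraph G - v.\<close>
definition factor_critical :: "'a set \<Rightarrow> 'a set set \<Rightarrow> bool" where
  "factor_critical V E \<longleftrightarrow>
     (\<forall>v\<in>V. \<exists>M. matching {e\<in>E. v \<notin> e} M \<and> \<Union>M = V - {v})"

definition walk :: "'a set set \<Rightarrow> 'a list \<Rightarrow> bool" where
  "walk E xs \<longleftrightarrow> xs \<noteq> [] \<and> (\<forall>i. Suc i < length xs \<longrightarrow> {xs ! i, xs ! Suc i} \<in> E)"

text \<open>Distance: length of a shortest u-v walk (= shortest path); infinity if none.\<close>
definition dist :: "'a set set \<Rightarrow> 'a \<Rightarrow> 'a \<Rightarrow> enat" where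
  "dist E u v = Inf {enat (length xs - 1) | xs. walk E xs \<and> hd xs = u \<and> last xs = v}"

definition diam :: "'a set \<Rightarrow> 'a set set \<Rightarrow> enat" where
  "diam V E = Sup {dist E u v | u v. u \<in> V \<and> v \<in> V}"

end

theory Submission
  imports Defs
begin

text \<open>
  Suppose u and v are non-adjacent and have no common neighbour. Let M be a perfect matching
  of G - u and e = vv' its edge at v. In G \ e the matching M - e leaves only u, v, v' uncovered,
  and these are pairwise non-adjacent there (an edge uv' would make v' a common neighbour),
  so M - e is maximal of size |M| - 1. A perfect matching of G - v avoids e and is maximal in
  G \ e of size |M|, contradicting equimatchability of G \ e.
\<close>

lemma simple_graph_edgeD:
  assumes "simple_graph V E" "f \<in> E"
  obtains a b where "f = {a, b}" "a \<noteq> b" "a \<in> V" "b \<in> V"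
  using assms unfolding simple_graph_def by blast

lemma card_Union_matching:
  assumes sg: "simple_graph V E" and m: "matching E M"
  shows "card (\<Union>M) = 2 * card M"
proof -
  have ME: "M \<subseteq> E" using m unfolding matching_def by auto
  have edge_card: "card f = 2 \<and> finite f" if "f \<in> M" for f
    using that ME by (auto elim!: simple_graph_edgeD[OF sg])
  have "pairwise disjnt M" using m unfolding matching_def pairwise_def disjnt_def by auto
  then have "card (\<Union>M) = sum card M" using edge_card by (intro card_Union_disjoint) auto
  also have "\<dots> = sum (\<lambda>_. 2) M" using edge_card by (intro sum.cong) auto
  finally show ?thesis by simp
qed

lemma near_perfect_matching_card:
  assumes "simple_graph V E" "matching E M" "\<Union>M = V - {v}" "v \<in> V"
  shows "2 * card M = card V - 1"
proof -
  have "finite V" using assms(1) unfolding simple_graph_def by simp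
  then show ?thesis using assms(3,4) card_Union_matching[OF assms(1,2)] by simp
qed

lemma factor_criticalE:
  assumes "factor_critical V E" "v \<in> V"
  obtains M where "matching E M" "\<Union>M = V - {v}"
proof -
  obtain M where M: "matching {e \<in> E. v \<notin> e} M" "\<Union>M = V - {v}"
    using assms unfolding factor_critical_def by auto
  then have "matching E M" unfolding matching_def by auto
  then show thesis using M(2) by (rule that)
qed

lemma maximal_matchingI:
  assumes m: "matching E M" and meets: "\<And>f. f \<in> E \<Longrightarrow> f \<inter> \<Union>M \<noteq> {}"
  shows "maximal_matching E M"
  unfolding maximal_matching_def
proof (intro conjI m allI impI)
  fix M' assume M': "matching E M' \<and> M \<subseteq> M'"
  show "M' = M"
  proof (rule ccontr)
    assume "M' \<noteq> M"
    then obtain f where f: "f \<in> M'" "f \<notin> M" using M' by auto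
    then have "f \<in> E" using M' unfolding matching_def by auto
    then obtain g where g: "g \<in> M" "f \<inter> g \<noteq> {}" using meets by blast
    then have "g \<in> M'" "g \<noteq> f" using f M' by auto
    then have "f \<inter> g = {}" using f(1) M' unfolding matching_def by auto
    then show False using g(2) by simp
  qed
qed

lemma finite_matching:
  assumes "simple_graph V E" "matching E M"
  shows "finite M"
proof -
  have "M \<subseteq> E" using assms(2) unfolding matching_def by simp
  also have "E \<subseteq> Pow V" using assms(1) unfolding simple_graph_def by auto
  finally show ?thesis using assms(1) unfolding simple_graph_def by (simp add: finite_subset)
qed

lemma edge_stable_factor_critical_common_neighbour:
  assumes sg: "simple_graph V E" and fc: "factor_critical V E" and es: "edge_stable V E"
    and u: "u \<in> V" and v: "v \<in> V" and "u \<noteq> v" and uv_not_edge: "{u, v} \<notin> E"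
  shows "\<exists>w. {u, w} \<in> E \<and> {w, v} \<in> E"
proof (rule ccontr)
  assume no_common: "\<not> ?thesis"
  obtain M where M: "matching E M" "\<Union>M = V - {u}" using factor_criticalE[OF fc u] .
  obtain N where N: "matching E N" "\<Union>N = V - {v}" using factor_criticalE[OF fc v] .
  obtain e where e: "e \<in> M" "v \<in> e" using M(2) v \<open>u \<noteq> v\<close> by auto
  have eE: "e \<in> E" using e M(1) unfolding matching_def by auto
  obtain a b where ab: "e = {a, b}" "a \<noteq> b" using sg eE by (rule simple_graph_edgeD)
  define v' where "v' = (if a = v then b else a)"
  have v': "e = {v, v'}" "v' \<noteq> v" using ab e(2) unfolding v'_def by auto
  have uv'_not_edge: "{u, v'} \<notin> E" using no_common eE v'(1) by (auto simp: insert_commute)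
  define M1 where "M1 = M - {e}"
  have M1_matching: "matching (E - {e}) M1" using M(1) unfolding M1_def matching_def by auto
  have disjoint_e: "f \<inter> e = {}" if "f \<in> M1" for f
    using that e(1) M(1) unfolding M1_def matching_def by auto
  have Union_M1: "\<Union>M1 = V - {u, v, v'}"
  proof
    show "\<Union>M1 \<subseteq> V - {u, v, v'}" using disjoint_e M(2) v'(1) unfolding M1_def by blast
    show "V - {u, v, v'} \<subseteq> \<Union>M1" using M(2) v'(1) unfolding M1_def by blast
  qed
  have "maximal_matching (E - {e}) M1"
  proof (rule maximal_matchingI[OF M1_matching])
    fix f assume f: "f \<in> E - {e}"
    obtain a b where ab: "f = {a, b}" "a \<noteq> b" "a \<in> V" "b \<in> V"
      using sg by (rule simple_graph_edgeD) (use f in blast)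
    have "f \<noteq> {u, v}" "f \<noteq> {u, v'}" "f \<noteq> {v, v'}" using f uv_not_edge uv'_not_edge v'(1) by auto
    then have "a \<notin> {u, v, v'} \<or> b \<notin> {u, v, v'}"
      using ab(1,2) by (auto simp: doubleton_eq_iff)
    then show "f \<inter> \<Union>M1 \<noteq> {}" using Union_M1 ab by auto
  qed
  moreover have "maximal_matching (E - {e}) N"
  proof (rule maximal_matchingI)
    show "matching (E - {e}) N" using N e(2) unfolding matching_def by auto
    fix f assume f: "f \<in> E - {e}"
    obtain a b where "f = {a, b}" "a \<noteq> b" "a \<in> V" "b \<in> V"
      using sg by (rule simple_graph_edgeD) (use f in blast)
    then show "f \<inter> \<Union>N \<noteq> {}" using N(2) by auto
  qed
  moreover have "equimatchable V (E - {e})" using es eE unfolding edge_stable_def by auto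
  ultimately have "card M1 = card N" unfolding equimatchable_def by blast
  moreover have "card M = card N"
    using near_perfect_matching_card[OF sg M u] near_perfect_matching_card[OF sg N v] by simp
  moreover have "card M1 < card M"
    unfolding M1_def using finite_matching[OF sg M(1)] e(1) by (rule card_Diff1_less)
  ultimately show False by simp
qed

lemma dist_le_walk:
  assumes "walk E xs"
  shows "dist E (hd xs) (last xs) \<le> enat (length xs - 1)"
  unfolding dist_def by (rule Inf_lower) (use assms in blast)

lemma diam_le_2I:
  assumes "\<And>u v. u \<in> V \<Longrightarrow> v \<in> V \<Longrightarrow> u \<noteq> v \<Longrightarrow> {u, v} \<notin> E \<Longrightarrow> \<exists>w. {u, w} \<in> E \<and> {w, v} \<in> E"
  shows "diam V E \<le> 2"
  unfolding diam_def
proof (rule Sup_least, clarify)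
  fix u v assume u: "u \<in> V" and v: "v \<in> V"
  have "\<exists>xs. walk E xs \<and> hd xs = u \<and> last xs = v \<and> length xs \<le> 3"
  proof (cases "u = v")
    case True
    then show ?thesis by (intro exI[of _ "[u]"]) (auto simp: walk_def)
  next
    case False
    show ?thesis
    proof (cases "{u, v} \<in> E")
      case True
      then show ?thesis by (intro exI[of _ "[u, v]"]) (auto simp: walk_def less_Suc_eq)
    next
      case nE: False
      then obtain w where "{u, w} \<in> E" "{w, v} \<in> E" using assms u v False by blast
      then show ?thesis
        by (intro exI[of _ "[u, w, v]"]) (auto simp: walk_def less_Suc_eq nth_Cons split: nat.splits)
    qed
  qed
  then obtain xs where xs: "walk E xs" "hd xs = u" "last xs = v" "length xs \<le> 3" by blast
  have "dist E u v \<le> enat (length xs - 1)" using dist_le_walk[OF xs(1)] xs(2,3) by simp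
  also have "\<dots> \<le> 2" using xs(4) by (simp add: numeral_eq_enat)
  finally show "dist E u v \<le> 2" .
qed

theorem corollary3p3:
  fixes V :: "'a set" and E :: "'a set set"
  assumes "simple_graph V E"
    and "factor_critical V E"
    and "equimatchable V E"
    and "edge_stable V E"
  shows "diam V E \<le> 2"
  using edge_stable_factor_critical_common_neighbour[OF assms(1,2,4)] by (rule diam_le_2I)

end
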